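(* For every integer $n\ge 0$ and every nonzero complex number $x$, \[ \sum_{j=0}^{n}L_{2(n-2j)}(x)=\sum_{j=0}^{n}\left(\frac{x^2+2}{2}\right)^jL_{2(n-j)}(x)=\frac{2}{x}F_{2(n+1)}(x). \]
   Context: The Fibonacci polynomials $F_n(x)$ and Lucas polynomials $L_n(x)$ are defined by $F_0(x)=0$, $F_1(x)=1$, $L_0(x)=2$, $L_1(x)=x$ and $G_{n+1}(x)=xG_n(x)+G_{n-1}(x)$; they are extended to negative indices by $F_{-n}(x)=(-1)^{n-1}F_n(x)$ and $L_{-n}(x)=(-1)^nL_n(x)$. *)

theory Defs
  imports Complex_Main
begin

fun fibp :: "nat \<Rightarrow> complex \<Rightarrow> complex" where
  "fibp 0 x = 0"
| "fibp (Suc 0) x = 1"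
| "fibp (Suc (Suc n)) x = x * fibp (Suc n) x + fibp n x"

fun lucp :: "nat \<Rightarrow> complex \<Rightarrow> complex" where
  "lucp 0 x = 2"
| "lucp (Suc 0) x = x"
| "lucp (Suc (Suc n)) x = x * lucp (Suc n) x + lucp n x"

definition Fib_poly :: "int \<Rightarrow> complex \<Rightarrow> complex" where
  "Fib_poly k x = (if k \<ge> 0 then fibp (nat k) x
                   else (-1) ^ (nat (-k) - 1) * fibp (nat (-k)) x)"

definition Luc_poly :: "int \<Rightarrow> complex \<Rightarrow> complex" where
  "Luc_poly k x = (if k \<ge> 0 then lucp (nat k) x
                   else (-1) ^ nat (-k) * lucp (nat (-k)) x)"

end

theory Submission
  imports Defs
begin

text \<open>
  After multiplication by \<open>x\<close> both sums become \<open>2 F_{2n+2}\<close>. This follows by induction on \<open>n\<close>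
  from the identities \<open>2 F_{n+2} = (x\<^sup>2 + 2) F_n + x L_n\<close> and \<open>F_{n+4} = F_n + x L_{n+2}\<close>:
  raising \<open>n\<close> by one multiplies the weighted sum by \<open>(x\<^sup>2 + 2)/2\<close> and adds \<open>L_{2n+2}\<close>,
  while raising \<open>n\<close> by two adds to the unweighted sum its two new end terms \<open>L_{\<plusminus>(2n+4)}\<close>,
  which coincide because \<open>L_{-2k} = L_{2k}\<close>.
\<close>

lemma two_fibp_Suc_Suc:
  "2 * fibp (Suc (Suc n)) x = (x\<^sup>2 + 2) * fibp n x + x * lucp n x"
proof (induction n rule: induct_nat_012)
  case (ge2 n)
  have "2 * fibp (Suc (Suc (Suc (Suc n)))) x
      = x * (2 * fibp (Suc (Suc (Suc n))) x) + 2 * fibp (Suc (Suc n)) x"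
    by (simp add: algebra_simps)
  also have "\<dots> = x * ((x\<^sup>2 + 2) * fibp (Suc n) x + x * lucp (Suc n) x)
                 + ((x\<^sup>2 + 2) * fibp n x + x * lucp n x)"
    using ge2 by simp
  also have "\<dots> = (x\<^sup>2 + 2) * fibp (Suc (Suc n)) x + x * lucp (Suc (Suc n)) x"
    by (simp add: algebra_simps)
  finally show ?case .
qed (simp_all add: algebra_simps power2_eq_square)

lemma fibp_add_4:
  "fibp (n + 4) x = fibp n x + x * lucp (n + 2) x"
proof (induction n rule: induct_nat_012)
  case (ge2 n)
  have "fibp (Suc (Suc n) + 4) x = x * fibp (Suc n + 4) x + fibp (n + 4) x"
    by (simp add: numeral_eq_Suc)
  also have "\<dots> = x * (fibp (Suc n) x + x * lucp (Suc n + 2) x) + (fibp n x + x * lucp (n + 2) x)"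
    using ge2 by simp
  also have "\<dots> = fibp (Suc (Suc n)) x + x * lucp (Suc (Suc n) + 2) x"
    by (simp add: numeral_eq_Suc algebra_simps)
  finally show ?case .
qed (simp_all add: numeral_eq_Suc algebra_simps)

lemma Fib_poly_of_nat: "Fib_poly (int n) x = fibp n x"
  by (simp add: Fib_poly_def)

lemma Luc_poly_even: "Luc_poly (2 * k) x = lucp (2 * nat \<bar>k\<bar>) x"
proof (cases "k \<ge> 0")
  case False
  then have "nat (- (2 * k)) = 2 * nat (- k)"
    by simp
  with False show ?thesis
    by (simp add: Luc_poly_def)
qed (simp add: Luc_poly_def nat_mult_distrib)

lemma lucp_weighted_sum:
  "x * (\<Sum>j=0..n. ((x\<^sup>2 + 2) / 2) ^ j * lucp (2 * (n - j)) x) = 2 * fibp (2 * n + 2) x"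
proof (induction n)
  case 0
  show ?case by (simp add: numeral_eq_Suc)
next
  case (Suc n)
  let ?c = "(x\<^sup>2 + 2) / 2"
  have "(\<Sum>j=0..Suc n. ?c ^ j * lucp (2 * (Suc n - j)) x)
      = lucp (2 * n + 2) x + (\<Sum>j=0..n. ?c ^ Suc j * lucp (2 * (n - j)) x)"
    by (simp only: sum.atLeast0_atMost_Suc_shift comp_def diff_Suc_Suc) simp
  also have "\<dots> = lucp (2 * n + 2) x + ?c * (\<Sum>j=0..n. ?c ^ j * lucp (2 * (n - j)) x)"
    by (simp add: sum_distrib_left mult.assoc)
  finally have "(\<Sum>j=0..Suc n. ?c ^ j * lucp (2 * (Suc n - j)) x)
      = lucp (2 * n + 2) x + ?c * (\<Sum>j=0..n. ?c ^ j * lucp (2 * (n - j)) x)" .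
  then have "x * (\<Sum>j=0..Suc n. ?c ^ j * lucp (2 * (Suc n - j)) x)
      = x * lucp (2 * n + 2) x + ?c * (x * (\<Sum>j=0..n. ?c ^ j * lucp (2 * (n - j)) x))"
    by (simp only: distrib_left mult.left_commute)
  also have "\<dots> = x * lucp (2 * n + 2) x + (x\<^sup>2 + 2) * fibp (2 * n + 2) x"
    by (simp only: Suc.IH) simp
  also have "\<dots> = 2 * fibp (2 * Suc n + 2) x"
    using two_fibp_Suc_Suc[of "2 * n + 2" x] by (simp add: numeral_eq_Suc)
  finally show ?case .
qed

lemma Luc_poly_alternating_sum_Suc_Suc:
  "(\<Sum>j=0..Suc (Suc n). Luc_poly (2 * (int (Suc (Suc n)) - 2 * int j)) x)
   = (\<Sum>j=0..n. Luc_poly (2 * (int n - 2 * int j)) x) + 2 * lucp (2 * Suc (Suc n)) x"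
  (is "sum (?f (Suc (Suc n))) _ = _")
proof -
  have outer: "?f m 0 = lucp (2 * m) x" "?f m m = lucp (2 * m) x" for m
    using Luc_poly_even[of "int m" x] Luc_poly_even[of "- int m" x] by simp_all
  have "sum (?f (Suc (Suc n))) {0..Suc (Suc n)}
      = ?f (Suc (Suc n)) 0 + (\<Sum>j=0..Suc n. ?f (Suc (Suc n)) (Suc j))"
    by (simp only: sum.atLeast_Suc_atMost[of 0] sum.shift_bounds_cl_Suc_ivl)
  also have "(\<Sum>j=0..Suc n. ?f (Suc (Suc n)) (Suc j))
      = (\<Sum>j=0..n. ?f (Suc (Suc n)) (Suc j)) + ?f (Suc (Suc n)) (Suc (Suc n))"
    by (rule sum.atLeast0_atMost_Suc)
  also have "(\<Sum>j=0..n. ?f (Suc (Suc n)) (Suc j)) = sum (?f n) {0..n}"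
    by (rule sum.cong) (simp_all add: algebra_simps)
  finally show ?thesis
    by (simp only: outer) (simp add: algebra_simps del: lucp.simps)
qed

lemma Luc_poly_alternating_sum:
  "x * (\<Sum>j=0..n. Luc_poly (2 * (int n - 2 * int j)) x) = 2 * fibp (2 * n + 2) x"
proof (induction n rule: induct_nat_012)
  case 0
  show ?case by (simp add: numeral_eq_Suc Luc_poly_def)
next
  case 1
  show ?case by (simp add: numeral_eq_Suc Luc_poly_def algebra_simps power2_eq_square)
next
  case (ge2 n)
  have "x * (\<Sum>j=0..Suc (Suc n). Luc_poly (2 * (int (Suc (Suc n)) - 2 * int j)) x)
      = x * (\<Sum>j=0..n. Luc_poly (2 * (int n - 2 * int j)) x) + 2 * (x * lucp (2 * Suc (Suc n)) x)"
    by (simp only: Luc_poly_alternating_sum_Suc_Suc distrib_left mult.left_commute)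
  also have "\<dots> = 2 * (fibp (2 * n + 2) x + x * lucp ((2 * n + 2) + 2) x)"
    by (simp only: ge2(1) distrib_left) (simp add: algebra_simps del: lucp.simps)
  also have "\<dots> = 2 * fibp ((2 * n + 2) + 4) x"
    by (simp only: fibp_add_4)
  also have "(2 * n + 2) + 4 = 2 * Suc (Suc n) + 2"
    by simp
  finally show ?case .
qed

theorem theorem10:
  fixes n :: nat and x :: complex
  assumes "x \<noteq> 0"
  shows "(\<Sum>j=0..n. Luc_poly (2 * (int n - 2 * int j)) x)
           = (\<Sum>j=0..n. ((x^2 + 2) / 2) ^ j * Luc_poly (2 * (int n - int j)) x)
       \<and> (\<Sum>j=0..n. ((x^2 + 2) / 2) ^ j * Luc_poly (2 * (int n - int j)) x)
           = 2 / x * Fib_poly (2 * (int n + 1)) x"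
proof -
  have "Luc_poly (2 * (int n - int j)) x = lucp (2 * (n - j)) x" if "j \<le> n" for j
    using that Luc_poly_even[of "int n - int j" x] by (simp add: nat_diff_distrib)
  then have "(\<Sum>j=0..n. ((x^2 + 2) / 2) ^ j * Luc_poly (2 * (int n - int j)) x)
      = (\<Sum>j=0..n. ((x^2 + 2) / 2) ^ j * lucp (2 * (n - j)) x)"
    by (intro sum.cong) auto
  with lucp_weighted_sum have weighted:
    "x * (\<Sum>j=0..n. ((x^2 + 2) / 2) ^ j * Luc_poly (2 * (int n - int j)) x) = 2 * fibp (2 * n + 2) x"
    by (simp only:)
  have Fib: "Fib_poly (2 * (int n + 1)) x = fibp (2 * n + 2) x"
    using Fib_poly_of_nat[of "2 * n + 2" x] by (simp add: algebra_simps del: fibp.simps)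
  have divide: "y = 2 / x * fibp (2 * n + 2) x" if "x * y = 2 * fibp (2 * n + 2) x" for y
    using that assms by (simp add: field_simps del: fibp.simps)
  show ?thesis
    unfolding Fib divide[OF weighted] divide[OF Luc_poly_alternating_sum] by simp
qed

end
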